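(* For each $n\ge 2$, there are exactly $2^{\aleph_0}$ pairwise non-isomorphic diameter-$4$ perfect Lee codes in $Z^n$.
   Context: Lee distance on $Z^n$: $\rho_L(v,w)=\sum_i|v_i-w_i|$; $S_{n,1}(v)=\{w:\rho_L(v,w)\le1\}$; for $\rho_L(v,w)=1$ the double-sphere is $DS_{n,1}(v,w)=S_{n,1}(v)\cup S_{n,1}(w)$. A copy of a set is its image under a linear distance-preserving bijection of $Z^n$; a tiling is a family of pairwise disjoint copies covering $Z^n$. A diameter-$4$ perfect Lee code in $Z^n$ is a set $\mathcal{L}$ with pairwise Lee distances $\ge 4$ such that there is a tiling of $Z^n$ by copies of $DS_{n,1}$ (the maximum-size anticode of diameter $3$) in which each tile contains exactly one element of $\mathcal{L}$ and distinct tiles contain distinct elements. Two codes are isomorphic if some linear distance-preserving bijection $Z^n\to Z^n$ maps one onto the other. *)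

theory Defs
  imports Complex_Main
begin

text \<open>Points of Z^n are represented as functions nat => int vanishing at all
  coordinates >= n.\<close>

definition Zn :: "nat \<Rightarrow> (nat \<Rightarrow> int) set" where
  "Zn n = {v. \<forall>i\<ge>n. v i = 0}"

definition lee_dist :: "nat \<Rightarrow> (nat \<Rightarrow> int) \<Rightarrow> (nat \<Rightarrow> int) \<Rightarrow> int" where
  "lee_dist n v w = (\<Sum>i<n. \<bar>v i - w i\<bar>)"

definition lee_sphere1 :: "nat \<Rightarrow> (nat \<Rightarrow> int) \<Rightarrow> (nat \<Rightarrow> int) set" where
  "lee_sphere1 n v = {w \<in> Zn n. lee_dist n v w \<le> 1}"

definition double_sphere :: "nat \<Rightarrow> (nat \<Rightarrow> int) \<Rightarrow> (nat \<Rightarrow> int) \<Rightarrow> (nat \<Rightarrow> int) set" where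
  "double_sphere n v w = lee_sphere1 n v \<union> lee_sphere1 n w"

definition DS :: "nat \<Rightarrow> (nat \<Rightarrow> int) set" where
  "DS n = double_sphere n (\<lambda>_. 0) (\<lambda>i. if i = 0 then 1 else 0)"

definition lee_isometry :: "nat \<Rightarrow> ((nat \<Rightarrow> int) \<Rightarrow> (nat \<Rightarrow> int)) \<Rightarrow> bool" where
  "lee_isometry n f \<longleftrightarrow> bij_betw f (Zn n) (Zn n) \<and>
     (\<forall>v\<in>Zn n. \<forall>w\<in>Zn n. lee_dist n (f v) (f w) = lee_dist n v w)"

definition linear_lee_isometry :: "nat \<Rightarrow> ((nat \<Rightarrow> int) \<Rightarrow> (nat \<Rightarrow> int)) \<Rightarrow> bool" where
  "linear_lee_isometry n f \<longleftrightarrow> lee_isometry n f \<and>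
     (\<forall>v\<in>Zn n. \<forall>w\<in>Zn n. f (\<lambda>i. v i + w i) = (\<lambda>i. f v i + f w i)) \<and>
     (\<forall>k. \<forall>v\<in>Zn n. f (\<lambda>i. k * v i) = (\<lambda>i. k * f v i))"

text \<open>A copy of a set: its image under a distance-preserving bijection of Z^n
  (translations must be allowed, otherwise no tiling exists).\<close>
definition is_copy :: "nat \<Rightarrow> (nat \<Rightarrow> int) set \<Rightarrow> (nat \<Rightarrow> int) set \<Rightarrow> bool" where
  "is_copy n S T \<longleftrightarrow> (\<exists>f. lee_isometry n f \<and> T = f ` S)"

definition DS_tiling :: "nat \<Rightarrow> (nat \<Rightarrow> int) set set \<Rightarrow> bool" where
  "DS_tiling n \<T> \<longleftrightarrow> (\<forall>T\<in>\<T>. is_copy n (DS n) T) \<and>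
     (\<forall>T\<in>\<T>. \<forall>T'\<in>\<T>. T \<noteq> T' \<longrightarrow> T \<inter> T' = {}) \<and> \<Union>\<T> = Zn n"

definition perfect_lee_code_d4 :: "nat \<Rightarrow> (nat \<Rightarrow> int) set \<Rightarrow> bool" where
  "perfect_lee_code_d4 n L \<longleftrightarrow> L \<subseteq> Zn n \<and>
     (\<forall>c\<in>L. \<forall>c'\<in>L. c \<noteq> c' \<longrightarrow> lee_dist n c c' \<ge> 4) \<and>
     (\<exists>\<T>. DS_tiling n \<T> \<and>
        (\<forall>T\<in>\<T>. \<exists>!c. c \<in> L \<and> c \<in> T) \<and>
        (\<forall>T\<in>\<T>. \<forall>T'\<in>\<T>. \<forall>c\<in>L. T \<noteq> T' \<and> c \<in> T \<longrightarrow> c \<notin> T'))"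

definition codes_d4 :: "nat \<Rightarrow> (nat \<Rightarrow> int) set set" where
  "codes_d4 n = {L. perfect_lee_code_d4 n L}"

definition code_iso :: "nat \<Rightarrow> ((nat \<Rightarrow> int) set \<times> (nat \<Rightarrow> int) set) set" where
  "code_iso n = {(L, L'). L \<in> codes_d4 n \<and> L' \<in> codes_d4 n \<and>
     (\<exists>f. linear_lee_isometry n f \<and> f ` L = L')}"

end

(*
  The lattice of all a in Z^n with  n | sum_{i=1}^{n-1} i * a_i  and  4 | a_0 - sum_{i=1}^{n-1} a_i
  is a diameter-4 perfect code: its minimum Lee distance is 4, and every point is covered by a
  translate of DS_{n,1} centred in it. The linear form a_0 - sum_{i=1}^{n-1} a_i ("height") splits
  the lattice into layers of height 4k, and translating the layers with k in an arbitrary set A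
  by e_0 + e_1 keeps both properties: distinct layers are at Lee distance at least 4, and a point
  is covered by the layer whose height is nearest to its own. The point 4j * e_0 lies in the
  resulting code iff j is not in A, so there are continuum many such codes. A linear isometry is
  determined by the images of the n unit vectors, hence each isomorphism class is countable and
  there are continuum many classes.
*)

theory Submission
  imports Defs "HOL-Library.Function_Algebras" "HOL-Analysis.Analysis"
begin

definition unit_vec :: "nat \<Rightarrow> nat \<Rightarrow> int" where
  "unit_vec m = (\<lambda>j. if j = m then 1 else 0)"

lemma Zn_add: "u \<in> Zn n \<Longrightarrow> v \<in> Zn n \<Longrightarrow> u + v \<in> Zn n"
  by (simp add: Zn_def)

lemma Zn_diff: "u \<in> Zn n \<Longrightarrow> v \<in> Zn n \<Longrightarrow> u - v \<in> Zn n"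
  by (simp add: Zn_def)

lemma zero_in_Zn: "0 \<in> Zn n"
  by (simp add: Zn_def)

lemma lee_dist_triangle: "lee_dist n u w \<le> lee_dist n u v + lee_dist n v w"
  unfolding lee_dist_def sum.distrib[symmetric] by (rule sum_mono) auto

lemma lee_dist_commute: "lee_dist n u v = lee_dist n v u"
  unfolding lee_dist_def by (rule sum.cong) auto

lemma lee_dist_eq_weight: "lee_dist n u v = lee_dist n 0 (u - v)"
  unfolding lee_dist_def by (rule sum.cong) auto

lemma lee_dist_add_right: "lee_dist n (u + c) (v + c) = lee_dist n u v"
  unfolding lee_dist_def by simp

lemma lee_dist_diff_left: "lee_dist n (x - u) (x - v) = lee_dist n u v"
  unfolding lee_dist_def by (rule sum.cong) auto

lemma lee_dist_split0:
  assumes "n \<ge> 1" shows "lee_dist n u v = \<bar>u 0 - v 0\<bar> + (\<Sum>i\<in>{1..<n}. \<bar>u i - v i\<bar>)"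
proof -
  have "{..<n} = insert 0 {1..<n}" using assms by auto
  then show ?thesis unfolding lee_dist_def by simp
qed

lemma weight_eq_0_imp_zero:
  assumes "d \<in> Zn n" "lee_dist n 0 d = 0" shows "d = 0"
proof
  fix j
  have "\<forall>i<n. \<bar>d i\<bar> = 0"
    using assms(2) sum_nonneg_eq_0_iff[of "{..<n}" "\<lambda>i. \<bar>d i\<bar>"] by (simp add: lee_dist_def)
  with assms(1) show "d j = 0 j" by (cases "j < n") (auto simp: Zn_def)
qed

lemma DS_iff:
  "u \<in> DS n \<longleftrightarrow> u \<in> Zn n \<and> (lee_dist n 0 u \<le> 1 \<or> lee_dist n (unit_vec 0) u \<le> 1)"
  by (auto simp: DS_def double_sphere_def lee_sphere1_def unit_vec_def zero_fun_def)

lemma DS_subset_Zn: "DS n \<subseteq> Zn n"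
  by (auto simp: DS_iff)

lemma zero_in_DS: "0 \<in> DS n"
  by (simp add: DS_iff zero_in_Zn lee_dist_def)

lemma DS_diameter:
  assumes "n \<ge> 1" "u \<in> DS n" "v \<in> DS n" shows "lee_dist n u v \<le> 3"
proof -
  have "lee_dist n 0 (unit_vec 0) = 1"
    using assms(1) by (simp add: lee_dist_split0 unit_vec_def)
  then show ?thesis
    using assms(2,3) lee_dist_triangle[of n u v 0] lee_dist_triangle[of n u v "unit_vec 0"]
      lee_dist_triangle[of n 0 v "unit_vec 0"] lee_dist_triangle[of n "unit_vec 0" v 0]
      lee_dist_commute[of n u 0] lee_dist_commute[of n u "unit_vec 0"]
      lee_dist_commute[of n 0 "unit_vec 0"]
    unfolding DS_iff by linarith
qed

definition coord_sum :: "nat \<Rightarrow> (nat \<Rightarrow> int) \<Rightarrow> int" where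
  "coord_sum n x = (\<Sum>i\<in>{1..<n}. x i)"

definition moment :: "nat \<Rightarrow> (nat \<Rightarrow> int) \<Rightarrow> int" where
  "moment n x = (\<Sum>i\<in>{1..<n}. int i * x i)"

definition height :: "nat \<Rightarrow> (nat \<Rightarrow> int) \<Rightarrow> int" where
  "height n x = x 0 - coord_sum n x"

definition base_code :: "nat \<Rightarrow> (nat \<Rightarrow> int) set" where
  "base_code n = {a \<in> Zn n. int n dvd moment n a \<and> 4 dvd height n a}"

lemma height_add: "height n (u + v) = height n u + height n v"
  by (simp add: height_def coord_sum_def sum.distrib)

lemma height_diff: "height n (u - v) = height n u - height n v"
  by (simp add: height_def coord_sum_def sum_subtractf)

lemma moment_diff: "moment n (u - v) = moment n u - moment n v"
  by (simp add: moment_def sum_subtractf algebra_simps)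

lemma height_diff_le_lee_dist:
  assumes "n \<ge> 1" shows "\<bar>height n u - height n v\<bar> \<le> lee_dist n u v"
proof -
  have "height n u - height n v = (u 0 - v 0) - (\<Sum>i\<in>{1..<n}. u i - v i)"
    by (simp add: height_def coord_sum_def sum_subtractf)
  moreover have "\<bar>\<Sum>i\<in>{1..<n}. u i - v i\<bar> \<le> (\<Sum>i\<in>{1..<n}. \<bar>u i - v i\<bar>)"
    by (rule sum_abs)
  ultimately show ?thesis using lee_dist_split0[OF assms, of u v] by linarith
qed

lemma even_weight_minus_height:
  assumes "n \<ge> 1" shows "even (lee_dist n 0 d - height n d)"
proof -
  have "lee_dist n 0 d - height n d = (\<bar>d 0\<bar> - d 0) + (\<Sum>i\<in>{1..<n}. \<bar>d i\<bar> + d i)"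
    using lee_dist_split0[OF assms, of 0 d]
    by (simp add: height_def coord_sum_def sum.distrib)
  moreover have "even (\<Sum>i\<in>{1..<n}. \<bar>d i\<bar> + d i)"
    by (rule dvd_sum) (auto simp: abs_if)
  ultimately show ?thesis by (auto simp: abs_if)
qed

lemma sum_eq_single:
  assumes "finite S" "i \<in> S" "\<forall>j\<in>S - {i}. f j = 0" shows "sum f S = f i"
  using assms by (simp add: sum.remove)

lemma not_dvd_moment_if_weight_2:
  assumes n: "n \<ge> 2" and weight: "lee_dist n 0 d = 2" and height: "height n d = 0"
  shows "\<not> int n dvd moment n d"
proof
  assume dvd: "int n dvd moment n d"
  define R where "R = (\<Sum>i\<in>{1..<n}. \<bar>d i\<bar>)"
  have weight2: "\<bar>d 0\<bar> + R = 2"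
    using lee_dist_split0[of n 0 d] n weight by (simp add: R_def)
  have d0: "d 0 = coord_sum n d" using height by (simp add: height_def)
  obtain i where i: "i \<in> {1..<n}" "d i \<noteq> 0"
  proof (rule ccontr)
    assume "\<not> thesis"
    then have "\<forall>i\<in>{1..<n}. d i = 0" using that by blast
    then show False using weight2 d0 by (simp add: R_def coord_sum_def)
  qed
  define S where "S = {1..<n} - {i}"
  have S: "finite S" "i \<notin> S" "{1..<n} = insert i S" using i by (auto simp: S_def)
  have R: "R = \<bar>d i\<bar> + (\<Sum>j\<in>S. \<bar>d j\<bar>)"
    using S unfolding R_def S(3) by simp
  have sum: "coord_sum n d = d i + (\<Sum>j\<in>S. d j)"
    using S unfolding coord_sum_def S(3) by simp
  have mom: "moment n d = int i * d i + (\<Sum>j\<in>S. int j * d j)"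
    using S unfolding moment_def S(3) by simp
  show False
  proof (cases "\<forall>j\<in>S. d j = 0")
    case True
    then have "\<bar>d i\<bar> = 1" using weight2 d0 R sum by simp
    moreover have "int n dvd int i * d i" using dvd mom True by simp
    ultimately have "int n dvd int i" by (simp add: dvd_mult_unit_iff)
    with i show False by (auto dest: dvd_imp_le)
  next
    case False
    then obtain j where j: "j \<in> S" "d j \<noteq> 0" by blast
    have "\<bar>d j\<bar> \<le> (\<Sum>j\<in>S. \<bar>d j\<bar>)" using j S by (intro member_le_sum) auto
    then have "d 0 = 0" "\<bar>d i\<bar> = 1" "(\<Sum>j\<in>S. \<bar>d j\<bar>) = \<bar>d j\<bar>"
      using weight2 R i j by linarith+
    then have rest: "\<forall>k\<in>S - {j}. d k = 0"
      using S j sum_nonneg_eq_0_iff[of "S - {j}" "\<lambda>k. \<bar>d k\<bar>"] by (simp add: sum.remove)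
    have "d j = - d i" using sum d0 \<open>d 0 = 0\<close> sum_eq_single[OF S(1) j(1) rest] by linarith
    moreover have "moment n d = int i * d i + int j * d j"
      using mom sum_eq_single[of S j "\<lambda>k. int k * d k"] S j rest by simp
    ultimately have "moment n d = d i * (int i - int j)" by (simp add: right_diff_distrib mult.commute)
    with dvd \<open>\<bar>d i\<bar> = 1\<close> have "int n dvd int i - int j"
      by (simp add: dvd_mult_unit_iff')
    moreover have "int i - int j \<noteq> 0" "\<bar>int i - int j\<bar> < int n"
      using i j S by (auto simp: S_def)
    ultimately show False using dvd_imp_le_int[of "int i - int j" "int n"] by linarith
  qed
qed

lemma base_code_min_weight:
  assumes n: "n \<ge> 2" and d: "d \<in> base_code n" "d \<noteq> 0"
  shows "lee_dist n 0 d \<ge> 4"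
proof (rule ccontr)
  assume small: "\<not> lee_dist n 0 d \<ge> 4"
  have "\<bar>height n d\<bar> \<le> 3"
    using height_diff_le_lee_dist[of n d 0] n small
    by (simp add: height_def coord_sum_def lee_dist_commute)
  moreover have "4 dvd height n d" using d by (simp add: base_code_def)
  ultimately have height: "height n d = 0" by (auto simp: dvd_def)
  have "lee_dist n 0 d \<noteq> 0" using weight_eq_0_imp_zero d by (auto simp: base_code_def)
  moreover have "even (lee_dist n 0 d)" using even_weight_minus_height[of n d] n height by simp
  moreover have "lee_dist n 0 d \<ge> 0" by (simp add: lee_dist_def sum_nonneg)
  ultimately have "lee_dist n 0 d = 2" using small by presburger
  then show False
    using not_dvd_moment_if_weight_2[OF n _ height] d by (simp add: base_code_def)
qed

lemma base_code_min_dist: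
  assumes "n \<ge> 2" "a \<in> base_code n" "b \<in> base_code n" "a \<noteq> b"
  shows "lee_dist n a b \<ge> 4"
proof -
  have "a - b \<in> base_code n"
    using assms(2,3) by (auto simp: base_code_def Zn_diff height_diff moment_diff)
  then show ?thesis
    using base_code_min_weight[OF assms(1)] assms(4) by (simp add: lee_dist_eq_weight[of n a b])
qed

definition pair_vec :: "int \<Rightarrow> nat \<Rightarrow> int \<Rightarrow> nat \<Rightarrow> int" where
  "pair_vec p i q = (\<lambda>j. if j = 0 then p else if j = i then q else 0)"

lemma pair_vec_in_Zn: "i \<in> {1..<n} \<Longrightarrow> pair_vec p i q \<in> Zn n"
  by (auto simp: Zn_def pair_vec_def)

lemma sum_pair_vec_tail:
  assumes "i \<in> {1..<n}"
  shows "(\<Sum>j\<in>{1..<n}. f j (pair_vec p i q j)) = f i q + (\<Sum>j\<in>{1..<n} - {i}. f j 0)"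
proof -
  have "(\<Sum>j\<in>{1..<n} - {i}. f j (pair_vec p i q j)) = (\<Sum>j\<in>{1..<n} - {i}. f j 0)"
    by (rule sum.cong) (auto simp: pair_vec_def)
  then show ?thesis using assms by (simp add: sum.remove pair_vec_def)
qed

lemma height_pair_vec: "i \<in> {1..<n} \<Longrightarrow> height n (pair_vec p i q) = p - q"
  using sum_pair_vec_tail[of i n "\<lambda>_ x. x"] by (simp add: height_def coord_sum_def pair_vec_def)

lemma moment_pair_vec: "i \<in> {1..<n} \<Longrightarrow> moment n (pair_vec p i q) = int i * q"
  using sum_pair_vec_tail[of i n "\<lambda>j x. int j * x"] by (simp add: moment_def)

lemma pair_vec_in_DS:
  assumes "i \<in> {1..<n}" "\<bar>p\<bar> + \<bar>q\<bar> \<le> 1 \<or> \<bar>1 - p\<bar> + \<bar>q\<bar> \<le> 1"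
  shows "pair_vec p i q \<in> DS n"
proof -
  have tail: "(\<Sum>j\<in>{1..<n}. \<bar>c j - pair_vec p i q j\<bar>) = \<bar>q\<bar>" if "\<forall>j\<ge>1. c j = 0" for c
    using sum_pair_vec_tail[of i n "\<lambda>j x. \<bar>c j - x\<bar>"] assms(1) that by simp
  have "lee_dist n 0 (pair_vec p i q) = \<bar>p\<bar> + \<bar>q\<bar>"
    using lee_dist_split0[of n] tail[of 0] assms(1) by (simp add: pair_vec_def)
  moreover have "lee_dist n (unit_vec 0) (pair_vec p i q) = \<bar>1 - p\<bar> + \<bar>q\<bar>"
    using lee_dist_split0[of n] tail[of "unit_vec 0"] assms(1) by (simp add: pair_vec_def unit_vec_def)
  ultimately show ?thesis using assms pair_vec_in_Zn by (auto simp: DS_iff)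
qed

lemma pair_vec_residues:
  assumes "n \<ge> 2"
  shows "\<exists>p i q. i \<in> {1..<n} \<and> pair_vec p i q \<in> DS n \<and>
           4 dvd h - (p - q) \<and> int n dvd v - int i * q"
proof -
  define r where "r = (h + 1) mod 4"
  define w where "w = v mod int n"
  have r: "0 \<le> r" "r < 4" "4 dvd h - (r - 1)"
    by (simp_all add: r_def mod_0_imp_dvd minus_mod_eq_mult_div[symmetric] algebra_simps)
  have w: "0 \<le> w" "w < int n" "int n dvd v - w"
    using assms by (simp_all add: w_def minus_mod_eq_mult_div[symmetric])
  consider "w = 0" | "w \<noteq> 0" "r \<le> 1" | "w \<noteq> 0" "r \<ge> 2" by linarith
  then show ?thesis
  proof cases
    case 1
    then show ?thesis
      using r w assms by (intro exI[of _ "r - 1"] exI[of _ 1] exI[of _ 0] conjI pair_vec_in_DS) auto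
  next
    case 2
    then show ?thesis
      using r w by (intro exI[of _ r] exI[of _ "nat w"] exI[of _ 1] conjI pair_vec_in_DS) auto
  next
    case 3
    have "v - int (n - nat w) * (- 1) = (v - w) + int n"
      using w by simp
    also have "int n dvd \<dots>"
      using w(3) by simp
    finally have "int n dvd v - int (n - nat w) * (- 1)" .
    then show ?thesis
      using r w 3 by (intro exI[of _ "r - 2"] exI[of _ "n - nat w"] exI[of _ "- 1"] conjI pair_vec_in_DS) auto
  qed
qed

lemma base_code_covers:
  assumes "n \<ge> 2" "x \<in> Zn n" shows "\<exists>a\<in>base_code n. x - a \<in> DS n"
proof -
  obtain p i q where i: "i \<in> {1..<n}" and DS: "pair_vec p i q \<in> DS n"
    and "4 dvd height n x - (p - q)" "int n dvd moment n x - int i * q"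
    using pair_vec_residues[OF assms(1)] by blast
  then have "x - pair_vec p i q \<in> base_code n"
    using assms(2) pair_vec_in_Zn
    by (simp add: base_code_def Zn_diff height_diff moment_diff height_pair_vec moment_pair_vec)
  moreover have "x - (x - pair_vec p i q) = pair_vec p i q" by simp
  ultimately show ?thesis using DS by metis
qed

definition DS_translate :: "nat \<Rightarrow> (nat \<Rightarrow> int) \<Rightarrow> (nat \<Rightarrow> int) set" where
  "DS_translate n c = (\<lambda>v. v + c) ` DS n"

lemma mem_DS_translate:
  assumes "c \<in> Zn n" shows "x \<in> DS_translate n c \<longleftrightarrow> x \<in> Zn n \<and> x - c \<in> DS n"
proof
  assume "x \<in> DS_translate n c"
  then obtain v where "v \<in> DS n" "x = v + c" by (auto simp: DS_translate_def)
  moreover have "v \<in> Zn n" using \<open>v \<in> DS n\<close> DS_subset_Zn by blast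
  ultimately show "x \<in> Zn n \<and> x - c \<in> DS n" using assms Zn_add by auto
next
  assume "x \<in> Zn n \<and> x - c \<in> DS n"
  then show "x \<in> DS_translate n c"
    unfolding DS_translate_def by (intro image_eqI[of _ _ "x - c"]) auto
qed

lemma DS_translate_is_copy: "c \<in> Zn n \<Longrightarrow> is_copy n (DS n) (DS_translate n c)"
  unfolding is_copy_def lee_isometry_def DS_translate_def
  by (intro exI[of _ "\<lambda>v. v + c"] conjI bij_betw_byWitness[where f' = "\<lambda>v. v - c"])
     (auto simp: lee_dist_add_right Zn_add Zn_diff)

lemma DS_translates_disjoint:
  assumes "n \<ge> 1" "c \<in> Zn n" "c' \<in> Zn n" "lee_dist n c c' \<ge> 4"
  shows "DS_translate n c \<inter> DS_translate n c' = {}"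
proof -
  have "lee_dist n c c' \<le> 3" if "x \<in> DS_translate n c" "x \<in> DS_translate n c'" for x
    using that assms(1-3) DS_diameter[of n "x - c'" "x - c"]
    by (simp add: mem_DS_translate lee_dist_diff_left lee_dist_commute)
  then show ?thesis using assms(4) by fastforce
qed

lemma DS_tiling_by_translates:
  assumes "n \<ge> 1" "L \<subseteq> Zn n"
    and dist: "\<And>c c'. c \<in> L \<Longrightarrow> c' \<in> L \<Longrightarrow> c \<noteq> c' \<Longrightarrow> lee_dist n c c' \<ge> 4"
    and cover: "\<And>x. x \<in> Zn n \<Longrightarrow> \<exists>c\<in>L. x - c \<in> DS n"
  shows "DS_tiling n (DS_translate n ` L)"
  unfolding DS_tiling_def
proof (intro conjI ballI impI)
  show "is_copy n (DS n) T" if "T \<in> DS_translate n ` L" for T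
    using that assms(2) DS_translate_is_copy by blast
  show "T \<inter> T' = {}" if "T \<in> DS_translate n ` L" "T' \<in> DS_translate n ` L" "T \<noteq> T'" for T T'
    using that assms(1,2) dist DS_translates_disjoint by blast
  show "\<Union> (DS_translate n ` L) = Zn n"
    using assms(2) cover by (auto simp: mem_DS_translate subset_iff)
qed

lemma perfect_lee_code_d4_if_packing_covering:
  assumes "n \<ge> 1" "L \<subseteq> Zn n"
    and dist: "\<And>c c'. c \<in> L \<Longrightarrow> c' \<in> L \<Longrightarrow> c \<noteq> c' \<Longrightarrow> lee_dist n c c' \<ge> 4"
    and cover: "\<And>x. x \<in> Zn n \<Longrightarrow> \<exists>c\<in>L. x - c \<in> DS n"
  shows "perfect_lee_code_d4 n L"
proof -
  have centre: "c \<in> DS_translate n c" if "c \<in> L" for c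
    using that assms(2) zero_in_DS by (auto simp: mem_DS_translate)
  have unique: "c = c'" if "c \<in> L" "c' \<in> L" "x \<in> DS_translate n c" "x \<in> DS_translate n c'"
    for c c' x
    using that assms(1,2) dist DS_translates_disjoint by blast
  have "\<exists>!c. c \<in> L \<and> c \<in> DS_translate n d" if "d \<in> L" for d
    using that centre unique by (intro ex1I[of _ d]) auto
  moreover have "c \<notin> DS_translate n d'"
    if "d \<in> L" "d' \<in> L" "c \<in> L" "DS_translate n d \<noteq> DS_translate n d'" "c \<in> DS_translate n d"
    for c d d'
    using that centre unique by metis
  ultimately show ?thesis
    unfolding perfect_lee_code_d4_def using assms(2) dist DS_tiling_by_translates[OF assms]
    by (intro conjI exI[of _ "DS_translate n ` L"]) auto
qed

definition shift_layers :: "nat \<Rightarrow> nat set \<Rightarrow> (nat \<Rightarrow> int) \<Rightarrow> nat \<Rightarrow> int" where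
  "shift_layers n A a = (if height n a div 4 \<in> int ` A then a + pair_vec 1 1 1 else a)"

definition layered_code :: "nat \<Rightarrow> nat set \<Rightarrow> (nat \<Rightarrow> int) set" where
  "layered_code n A = shift_layers n A ` base_code n"

lemma height_shift_layers: "n \<ge> 2 \<Longrightarrow> height n (shift_layers n A a) = height n a"
  by (simp add: shift_layers_def height_add height_pair_vec)

lemma layered_code_subset_Zn: "n \<ge> 2 \<Longrightarrow> layered_code n A \<subseteq> Zn n"
  by (auto simp: layered_code_def shift_layers_def base_code_def Zn_add pair_vec_in_Zn)

lemma DS_height_bounds:
  assumes "n \<ge> 1" "u \<in> DS n" shows "- 1 \<le> height n u \<and> height n u \<le> 2"
proof -
  have "height n 0 = 0" "height n (unit_vec 0) = 1"
    by (simp_all add: height_def coord_sum_def unit_vec_def)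
  then show ?thesis
    using assms height_diff_le_lee_dist[of n 0 u] height_diff_le_lee_dist[of n "unit_vec 0" u]
    by (auto simp: DS_iff)
qed

lemma layered_code_min_dist:
  assumes n: "n \<ge> 2" and c: "c \<in> layered_code n A" "c' \<in> layered_code n A" "c \<noteq> c'"
  shows "lee_dist n c c' \<ge> 4"
proof -
  obtain a a' where a: "a \<in> base_code n" "c = shift_layers n A a"
    and a': "a' \<in> base_code n" "c' = shift_layers n A a'"
    using c by (auto simp: layered_code_def)
  show ?thesis
  proof (cases "height n a div 4 = height n a' div 4")
    case True
    then have "lee_dist n c c' = lee_dist n a a'"
      using a a' by (simp add: shift_layers_def lee_dist_add_right)
    then show ?thesis using base_code_min_dist[OF n a(1) a'(1)] a a' c(3) by auto
  next
    case False
    obtain k k' where "height n a = 4 * k" "height n a' = 4 * k'"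
      using a a' by (auto simp: base_code_def elim!: dvdE)
    with False have "\<bar>height n a - height n a'\<bar> \<ge> 4" by auto
    then show ?thesis
      using height_diff_le_lee_dist[of n c c'] height_shift_layers[OF n] a a' n by simp
  qed
qed

lemma layered_code_covers:
  assumes n: "n \<ge> 2" and x: "x \<in> Zn n" shows "\<exists>c\<in>layered_code n A. x - c \<in> DS n"
proof -
  define j where "j = (height n x + 1) div 4"
  define x' where "x' = (if j \<in> int ` A then x - pair_vec 1 1 1 else x)"
  have "x' \<in> Zn n" using x n by (simp add: x'_def Zn_diff pair_vec_in_Zn)
  then obtain a where a: "a \<in> base_code n" "x' - a \<in> DS n" using base_code_covers[OF n] by blast
  have "height n x' = height n x" using n by (simp add: x'_def height_diff height_pair_vec)
  then have "height n x - 2 \<le> height n a" "height n a \<le> height n x + 1"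
    using DS_height_bounds[of n "x' - a"] a(2) n by (simp_all add: height_diff)
  moreover obtain k where "height n a = 4 * k" using a(1) by (auto simp: base_code_def elim!: dvdE)
  moreover have "4 * j - 1 \<le> height n x" "height n x \<le> 4 * j + 2"
    unfolding j_def by auto
  ultimately have "height n a div 4 = j" by simp
  then have "x - shift_layers n A a = x' - a" by (simp add: shift_layers_def x'_def)
  moreover have "shift_layers n A a \<in> layered_code n A" using a(1) by (simp add: layered_code_def)
  ultimately show ?thesis using a(2) by metis
qed

lemma layered_code_is_perfect: "n \<ge> 2 \<Longrightarrow> perfect_lee_code_d4 n (layered_code n A)"
  by (rule perfect_lee_code_d4_if_packing_covering)
     (auto simp: layered_code_subset_Zn layered_code_min_dist layered_code_covers)

lemma pair_vec_in_layered_code_iff: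
  assumes n: "n \<ge> 2" shows "pair_vec (4 * int j) 1 0 \<in> layered_code n A \<longleftrightarrow> j \<notin> A"
proof -
  have one: "1 \<in> {1..<n}" using n by simp
  have base: "pair_vec (4 * int j) 1 0 \<in> base_code n"
    using one by (simp add: base_code_def pair_vec_in_Zn height_pair_vec moment_pair_vec)
  show ?thesis
  proof
    assume "pair_vec (4 * int j) 1 0 \<in> layered_code n A"
    then obtain a where a: "a \<in> base_code n" "pair_vec (4 * int j) 1 0 = shift_layers n A a"
      by (auto simp: layered_code_def)
    have "height n a = 4 * int j"
      using height_shift_layers[OF n, of A a] height_pair_vec[OF one] by (simp add: a(2)[symmetric])
    show "j \<notin> A"
    proof
      assume "j \<in> A"
      with a(2) \<open>height n a = 4 * int j\<close> have "a = pair_vec (4 * int j) 1 0 - pair_vec 1 1 1"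
        by (simp add: shift_layers_def)
      then have "moment n a = - 1" using one by (simp add: moment_diff moment_pair_vec)
      with a(1) n show False by (simp add: base_code_def)
    qed
  next
    assume "j \<notin> A"
    then have "shift_layers n A (pair_vec (4 * int j) 1 0) = pair_vec (4 * int j) 1 0"
      using one by (auto simp: shift_layers_def height_pair_vec)
    then show "pair_vec (4 * int j) 1 0 \<in> layered_code n A"
      using base unfolding layered_code_def by (metis image_eqI)
  qed
qed

lemma inj_layered_code: "n \<ge> 2 \<Longrightarrow> inj (layered_code n)"
  by (rule injI) (metis pair_vec_in_layered_code_iff subsetI subset_antisym)

lemma unit_vec_in_Zn: "i < n \<Longrightarrow> unit_vec i \<in> Zn n"
  by (simp add: Zn_def unit_vec_def)

lemma sum_fun_apply: "(\<Sum>i\<in>I. g i) x = (\<Sum>i\<in>I. g i x)"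
  by (induction I rule: infinite_finite_induct) auto

lemma Zn_unit_vec_expansion:
  assumes "v \<in> Zn n" shows "v = (\<Sum>i<n. (\<lambda>j. v i * unit_vec i j))"
proof
  fix j
  have "(\<Sum>i<n. v i * unit_vec i j) = (\<Sum>i<n. if i = j then v j else 0)"
    by (rule sum.cong) (auto simp: unit_vec_def)
  then show "v j = (\<Sum>i<n. (\<lambda>j. v i * unit_vec i j)) j"
    using assms by (auto simp: sum_fun_apply Zn_def)
qed

lemma linear_lee_isometry_add:
  "linear_lee_isometry n f \<Longrightarrow> u \<in> Zn n \<Longrightarrow> v \<in> Zn n \<Longrightarrow> f (u + v) = f u + f v"
  unfolding linear_lee_isometry_def plus_fun_def by blast

lemma linear_lee_isometry_in_Zn: "linear_lee_isometry n f \<Longrightarrow> v \<in> Zn n \<Longrightarrow> f v \<in> Zn n"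
  unfolding linear_lee_isometry_def lee_isometry_def bij_betw_def by blast

lemma linear_lee_isometry_zero: "linear_lee_isometry n f \<Longrightarrow> f 0 = 0"
  using linear_lee_isometry_add[of n f 0 0] zero_in_Zn by simp

lemma linear_lee_isometry_sum:
  assumes f: "linear_lee_isometry n f" and g: "\<forall>i\<in>I. g i \<in> Zn n"
  shows "f (\<Sum>i\<in>I. g i) = (\<Sum>i\<in>I. f (g i)) \<and> (\<Sum>i\<in>I. g i) \<in> Zn n"
  using g
proof (induction I rule: infinite_finite_induct)
  case (insert x F)
  then have Z: "sum g F \<in> Zn n" "g x \<in> Zn n" by simp_all
  have "f (g x + sum g F) = f (g x) + (\<Sum>i\<in>F. f (g i))"
    using linear_lee_isometry_add[OF f Z(2,1)] insert by simp
  then show ?case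
    unfolding sum.insert[OF insert(1,2)] using Zn_add[OF Z(2,1)] by blast
qed (simp_all add: linear_lee_isometry_zero[OF f] zero_in_Zn)

lemma linear_lee_isometry_expansion:
  assumes f: "linear_lee_isometry n f" and v: "v \<in> Zn n"
  shows "f v = (\<lambda>k. \<Sum>i<n. v i * f (unit_vec i) k)"
proof -
  have hom: "f (\<lambda>j. v i * unit_vec i j) = (\<lambda>k. v i * f (unit_vec i) k)" if "i < n" for i
    using f unit_vec_in_Zn[OF that] unfolding linear_lee_isometry_def by blast
  have Z: "\<forall>i\<in>{..<n}. (\<lambda>j. v i * unit_vec i j) \<in> Zn n"
    using unit_vec_in_Zn by (auto simp: Zn_def)
  from Zn_unit_vec_expansion[OF v] have "f v = f (\<Sum>i<n. (\<lambda>j. v i * unit_vec i j))"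
    by (rule arg_cong)
  also have "\<dots> = (\<Sum>i<n. f (\<lambda>j. v i * unit_vec i j))"
    using linear_lee_isometry_sum[OF f Z] by (rule conjunct1)
  also have "\<dots> = (\<Sum>i<n. (\<lambda>k. v i * f (unit_vec i) k))"
    by (rule sum.cong) (simp_all add: hom)
  finally show ?thesis by (simp add: fun_eq_iff sum_fun_apply)
qed

definition matrix_map :: "nat \<Rightarrow> (nat \<Rightarrow> int) list \<Rightarrow> (nat \<Rightarrow> int) \<Rightarrow> nat \<Rightarrow> int" where
  "matrix_map n cols v = (\<lambda>k. \<Sum>i<n. v i * (cols ! i) k)"

lemma countable_Zn: "countable (Zn n)"
proof (rule countable_image_inj_on)
  show "countable ((\<lambda>v. map v [0..<n]) ` Zn n)" by simp
  show "inj_on (\<lambda>v. map v [0..<n]) (Zn n)"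
  proof
    fix u v assume "u \<in> Zn n" "v \<in> Zn n" "map u [0..<n] = map v [0..<n]"
    then show "u = v" by (auto simp: fun_eq_iff Zn_def map_eq_conv not_less)
  qed
qed

lemma countable_linear_lee_isometry_images:
  assumes "L \<subseteq> Zn n" shows "countable {f ` L |f. linear_lee_isometry n f}"
proof -
  have "{f ` L |f. linear_lee_isometry n f} \<subseteq> (\<lambda>cols. matrix_map n cols ` L) ` lists (Zn n)"
  proof clarify
    fix f assume f: "linear_lee_isometry n f"
    define cols where "cols = map (\<lambda>i. f (unit_vec i)) [0..<n]"
    have "cols \<in> lists (Zn n)"
      using f by (auto simp: cols_def linear_lee_isometry_in_Zn unit_vec_in_Zn)
    moreover have "f ` L = matrix_map n cols ` L"
    proof (rule image_cong[OF refl])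
      show "f v = matrix_map n cols v" if "v \<in> L" for v
        using that assms linear_lee_isometry_expansion[OF f] by (auto simp: matrix_map_def cols_def)
    qed
    ultimately show "f ` L \<in> (\<lambda>cols. matrix_map n cols ` L) ` lists (Zn n)" by blast
  qed
  then show ?thesis by (rule countable_subset) (simp add: countable_Zn)
qed

lemma lepoll_image_if_countable_fibres:
  assumes "uncountable A" and fibres: "\<And>y. countable {x\<in>A. f x = y}"
  shows "A \<lesssim> f ` A"
proof -
  have A: "A = (\<Union>y\<in>f ` A. {x\<in>A. f x = y})" by auto
  have "infinite (f ` A)"
  proof
    assume "finite (f ` A)"
    then have "countable (\<Union>y\<in>f ` A. {x\<in>A. f x = y})"
      using fibres countable_finite by blast
    with A assms(1) show False by simp
  qed
  then have "(UNIV :: nat set) \<lesssim> f ` A" by (simp add: infinite_le_lepoll)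
  then have "{x\<in>A. f x = y} \<lesssim> f ` A" for y
    using fibres[of y] lepoll_trans unfolding countable_def lepoll_def by blast
  then have "(card_of (\<Union>y\<in>f ` A. {x\<in>A. f x = y}), card_of (f ` A)) \<in> ordLeq"
    using \<open>infinite (f ` A)\<close>
    by (intro card_of_UNION_ordLeq_infinite) (auto simp: lepoll_def card_of_ordLeq intro: card_of_mono1)
  then show ?thesis by (subst A) (simp add: lepoll_def card_of_ordLeq)
qed

lemma quotient_lepoll: "A // r \<lesssim> A"
proof -
  have "A // r = (\<lambda>x. r `` {x}) ` A" by (auto simp: quotient_def)
  then show ?thesis by (simp add: image_lepoll)
qed

lemma Pow_countable_lepoll: "countable S \<Longrightarrow> Pow S \<lesssim> (UNIV :: nat set set)"
  unfolding lepoll_def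
  by (intro exI[of _ "image (to_nat_on S)"] conjI inj_onI)
     (auto simp: inj_on_image_eq_iff[OF inj_on_to_nat_on])

lemma code_iso_refl: "L \<in> codes_d4 n \<Longrightarrow> (L, L) \<in> code_iso n"
  by (auto simp: code_iso_def linear_lee_isometry_def lee_isometry_def)

lemma countable_layered_code_fibre:
  assumes n: "n \<ge> 2"
  shows "countable {A. code_iso n `` {layered_code n A} = q}"
proof (cases "{A. code_iso n `` {layered_code n A} = q} = {}")
  case False
  then obtain A0 where A0: "code_iso n `` {layered_code n A0} = q" by blast
  have code: "layered_code n A \<in> codes_d4 n" for A
    using layered_code_is_perfect[OF n] by (simp add: codes_d4_def)
  have "layered_code n ` {A. code_iso n `` {layered_code n A} = q}
      \<subseteq> {f ` layered_code n A0 |f. linear_lee_isometry n f}"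
  proof
    fix L assume "L \<in> layered_code n ` {A. code_iso n `` {layered_code n A} = q}"
    then obtain A where A: "code_iso n `` {layered_code n A} = q" "L = layered_code n A" by blast
    have "(layered_code n A0, layered_code n A) \<in> code_iso n"
      using A A0 code_iso_refl[OF code] by blast
    then show "L \<in> {f ` layered_code n A0 |f. linear_lee_isometry n f}"
      using A(2) by (auto simp: code_iso_def)
  qed
  then have "countable (layered_code n ` {A. code_iso n `` {layered_code n A} = q})"
    using countable_linear_lee_isometry_images[OF layered_code_subset_Zn[OF n]]
    by (rule countable_subset)
  then show ?thesis
    by (rule countable_image_inj_on) (meson inj_layered_code[OF n] inj_on_subset subset_UNIV)
qed simp

theorem theorem8:
  fixes n :: nat
  assumes "n \<ge> 2"
  shows "\<exists>g. bij_betw g (codes_d4 n // code_iso n) (UNIV :: real set)"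
proof -
  let ?Q = "codes_d4 n // code_iso n"
  let ?F = "\<lambda>A. code_iso n `` {layered_code n A}"
  have "?Q \<lesssim> codes_d4 n" by (rule quotient_lepoll)
  also have "codes_d4 n \<lesssim> Pow (Zn n)"
    by (rule subset_imp_lepoll) (auto simp: codes_d4_def perfect_lee_code_d4_def)
  also have "Pow (Zn n) \<lesssim> (UNIV :: nat set set)"
    by (rule Pow_countable_lepoll[OF countable_Zn])
  finally have upper: "?Q \<lesssim> (UNIV :: nat set set)" .
  have "uncountable (UNIV :: nat set set)"
    using nat_sets_eqpoll_reals uncountable_UNIV_real countable_eqpoll eqpoll_sym by blast
  then have "(UNIV :: nat set set) \<lesssim> range ?F"
    using countable_layered_code_fibre[OF assms] by (intro lepoll_image_if_countable_fibres) auto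
  also have "range ?F \<lesssim> ?Q"
    using layered_code_is_perfect[OF assms]
    by (intro subset_imp_lepoll) (auto simp: codes_d4_def intro: quotientI)
  finally have "?Q \<approx> (UNIV :: nat set set)" using upper lepoll_antisym by blast
  also have "\<dots> \<approx> (UNIV :: real set)" by (rule nat_sets_eqpoll_reals)
  finally show ?thesis unfolding eqpoll_def .
qed

end
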